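(* Let $k\ge 2$ and let $T_1,\dots,T_k$ be finite sets. Let $\widetilde H=(\widetilde h_{j,i})_{1\le i,j\le k}$ be a $k\times k$ lower-triangular matrix of nonnegative integers with zero diagonal. Suppose there exists a reference structure $(f_2,\dots,f_k)$ on the chain $T_k\to\cdots\to T_1$ whose linear join matrix equals $\widetilde H$. Then: (L1) $\widetilde h_{j,i}\le \min_{i\le n\le j}|T_n|$ for all $1\le i<j\le k$; (L2) $\widetilde h_{i+1,i}\ge \widetilde h_{i+2,i}\ge\cdots\ge \widetilde h_{k,i}$ for all $1\le i\le k-1$; (L3) $\widetilde h_{j,1}\le \widetilde h_{j,2}\le\cdots\le \widetilde h_{j,j-1}$ for all $2\le j\le k$; (L4) $\widetilde h_{j,i+1}-\widetilde h_{j+1,i+1}\ge \widetilde h_{j,i}-\widetilde h_{j+1,i}$ for all indices with $1\le i<j-1<k-1$ (i.e. $i+1<j<k$).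
   Context: A reference structure on the chain $T_k\to\cdots\to T_1$ is a family of partial functions $f_n:T_n\rightharpoonup T_{n-1}$ for $2\le n\le k$ (each tuple $t\in T_n$ references at most one tuple $f_n(t)\in T_{n-1}$; "$t$ references $t'$" means $f_n(t)=t'$). For $1\le i<j\le k$, a tuple $t\in T_i$ is a root of $T_j\to\cdots\to T_i$ if there exist $t_{i+1}\in T_{i+1},\dots,t_j\in T_j$ with $f_n(t_n)=t_{n-1}$ for all $i<n\le j$, where $t_i=t$. Let $S_{j,i}\subseteq T_i$ be the set of such roots and $h_{j,i}=|S_{j,i}|$. The linear join matrix of the reference structure is the $k\times k$ lower-triangular matrix $H$ with entries $h_{j,i}$ for $j>i$ and $0$ on and above the diagonal. *)

theory Defs
  imports Main
begin

text \<open>A reference structure assigns to each level n (2 \<le> n \<le> k) a partial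
  function f n : T n \<rightharpoonup> T (n-1), modelled as an option-valued map
  that is undefined (None) outside T n and takes values in T (n-1).\<close>

definition reference_structure ::
  "nat \<Rightarrow> (nat \<Rightarrow> 'a set) \<Rightarrow> (nat \<Rightarrow> 'a \<Rightarrow> 'a option) \<Rightarrow> bool" where
  "reference_structure k T f \<longleftrightarrow>
     (\<forall>n\<in>{2..k}. \<forall>t.
        (t \<notin> T n \<longrightarrow> f n t = None) \<and>
        (\<forall>t'. f n t = Some t' \<longrightarrow> t' \<in> T (n - 1)))"

definition is_root ::
  "(nat \<Rightarrow> 'a set) \<Rightarrow> (nat \<Rightarrow> 'a \<Rightarrow> 'a option) \<Rightarrow> nat \<Rightarrow> nat \<Rightarrow> 'a \<Rightarrow> bool" where
  "is_root T f j i t \<longleftrightarrow> t \<in> T i \<and>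
     (\<exists>ts :: nat \<Rightarrow> 'a. ts i = t \<and>
        (\<forall>n\<in>{i+1..j}. ts n \<in> T n \<and> f n (ts n) = Some (ts (n - 1))))"

definition roots ::
  "(nat \<Rightarrow> 'a set) \<Rightarrow> (nat \<Rightarrow> 'a \<Rightarrow> 'a option) \<Rightarrow> nat \<Rightarrow> nat \<Rightarrow> 'a set" where
  "roots T f j i = {t. is_root T f j i t}"

definition linear_join_matrix ::
  "nat \<Rightarrow> (nat \<Rightarrow> 'a set) \<Rightarrow> (nat \<Rightarrow> 'a \<Rightarrow> 'a option) \<Rightarrow> nat \<Rightarrow> nat \<Rightarrow> nat" where
  "linear_join_matrix k T f j i =
     (if 1 \<le> i \<and> i < j \<and> j \<le> k then card (roots T f j i) else 0)"

end

theory Submission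
  imports Defs
begin

text \<open>Every root of \<open>T\<^sub>j \<rightarrow> \<dots> \<rightarrow> T\<^sub>i\<close> is the image under \<open>f\<^sub>i\<^sub>+\<^sub>1\<close> of a root of
  \<open>T\<^sub>j \<rightarrow> \<dots> \<rightarrow> T\<^sub>i\<^sub>+\<^sub>1\<close>, and lengthening the chain at the top can only remove roots. For (L4): a root of \<open>T\<^sub>j \<rightarrow> \<dots> \<rightarrow> T\<^sub>i\<close> that is lost when passing
  to \<open>T\<^sub>j\<^sub>+\<^sub>1\<close> has only preimages that are lost as well, so the lost roots at level \<open>i\<close>
  are images of lost roots at level \<open>i + 1\<close>.\<close>

lemma is_root_antimono:
  assumes "is_root T f j' i t" "j \<le> j'"
  shows "is_root T f j i t"
  using assms by (fastforce simp: is_root_def)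

lemma roots_antimono: "j \<le> j' \<Longrightarrow> roots T f j' i \<subseteq> roots T f j i"
  by (auto simp: roots_def intro: is_root_antimono)

lemma roots_subset_level: "roots T f j i \<subseteq> T i"
  by (auto simp: roots_def is_root_def)

lemma is_root_step_iff:
  assumes "i < j"
  shows "is_root T f j i t \<longleftrightarrow>
           t \<in> T i \<and> (\<exists>s. is_root T f j (Suc i) s \<and> f (Suc i) s = Some t)"
proof
  assume "is_root T f j i t"
  then obtain ts where t: "t \<in> T i" "ts i = t"
    and ts: "\<forall>n\<in>{i+1..j}. ts n \<in> T n \<and> f n (ts n) = Some (ts (n - 1))"
    by (auto simp: is_root_def)
  have "is_root T f j (Suc i) (ts (Suc i))"
    using ts assms by (auto simp: is_root_def)
  moreover have "f (Suc i) (ts (Suc i)) = Some t"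
    using ts assms t(2) by auto
  ultimately show "t \<in> T i \<and> (\<exists>s. is_root T f j (Suc i) s \<and> f (Suc i) s = Some t)"
    using t(1) by blast
next
  assume "t \<in> T i \<and> (\<exists>s. is_root T f j (Suc i) s \<and> f (Suc i) s = Some t)"
  then obtain s ts where t: "t \<in> T i" and s: "s \<in> T (Suc i)" "f (Suc i) s = Some t" "ts (Suc i) = s"
    and ts: "\<forall>n\<in>{Suc i+1..j}. ts n \<in> T n \<and> f n (ts n) = Some (ts (n - 1))"
    by (auto simp: is_root_def)
  have "\<forall>n\<in>{i+1..j}. (ts(i := t)) n \<in> T n \<and> f n ((ts(i := t)) n) = Some ((ts(i := t)) (n - 1))"
  proof
    fix n assume n: "n \<in> {i+1..j}"
    show "(ts(i := t)) n \<in> T n \<and> f n ((ts(i := t)) n) = Some ((ts(i := t)) (n - 1))"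
    proof (cases "n = Suc i")
      case True
      then show ?thesis using s by simp
    next
      case False
      then have "n \<in> {Suc i+1..j}" "n \<noteq> i" "n - 1 \<noteq> i" using n by auto
      then show ?thesis using ts by simp
    qed
  qed
  then show "is_root T f j i t"
    unfolding is_root_def using t by (intro conjI exI[of _ "ts(i := t)"]) simp_all
qed

lemma roots_subset_image_roots_Suc:
  assumes "i < j"
  shows "roots T f j i \<subseteq> (\<lambda>s. the (f (Suc i) s)) ` roots T f j (Suc i)"
proof
  fix t assume "t \<in> roots T f j i"
  then obtain s where "is_root T f j (Suc i) s" "f (Suc i) s = Some t"
    by (auto simp: roots_def is_root_step_iff[OF assms])
  then show "t \<in> (\<lambda>s. the (f (Suc i) s)) ` roots T f j (Suc i)"
    by (auto simp: roots_def intro!: image_eqI[of _ _ s])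
qed

lemma lost_roots_subset_image_lost_roots_Suc:
  assumes "i < j"
  shows "roots T f j i - roots T f (Suc j) i
           \<subseteq> (\<lambda>s. the (f (Suc i) s)) ` (roots T f j (Suc i) - roots T f (Suc j) (Suc i))"
proof
  fix t assume t: "t \<in> roots T f j i - roots T f (Suc j) i"
  then obtain s where s: "is_root T f j (Suc i) s" "f (Suc i) s = Some t" and "t \<in> T i"
    by (auto simp: roots_def is_root_step_iff[OF assms])
  moreover have "\<not> is_root T f (Suc j) i t"
    using t by (simp add: roots_def)
  ultimately have "\<not> is_root T f (Suc j) (Suc i) s"
    using is_root_step_iff[OF less_SucI[OF assms], of T f t] by blast
  then show "t \<in> (\<lambda>s. the (f (Suc i) s)) ` (roots T f j (Suc i) - roots T f (Suc j) (Suc i))"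
    using s by (auto simp: roots_def intro!: image_eqI[of _ _ s])
qed

lemma card_roots_Suc_le:
  assumes "finite (roots T f j i)"
  shows "card (roots T f (Suc j) i) \<le> card (roots T f j i)"
  using card_mono[OF assms roots_antimono] by simp

lemma card_lost_roots:
  assumes "finite (roots T f j i)"
  shows "card (roots T f j i - roots T f (Suc j) i)
           = card (roots T f j i) - card (roots T f (Suc j) i)"
  using card_Diff_subset[OF finite_subset[OF roots_antimono assms] roots_antimono] by simp

lemma card_roots_le_card_roots_Suc:
  assumes "i < j" "finite (roots T f j (Suc i))"
  shows "card (roots T f j i) \<le> card (roots T f j (Suc i))"
  using card_mono[OF finite_imageI[OF assms(2)] roots_subset_image_roots_Suc[OF assms(1)]]
    card_image_le[OF assms(2), of "\<lambda>s. the (f (Suc i) s)"] by linarith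

lemma card_lost_roots_le_card_lost_roots_Suc:
  assumes "i < j" "finite (roots T f j (Suc i))"
  shows "card (roots T f j i - roots T f (Suc j) i)
           \<le> card (roots T f j (Suc i) - roots T f (Suc j) (Suc i))"
proof -
  have fin: "finite (roots T f j (Suc i) - roots T f (Suc j) (Suc i))"
    using assms(2) by blast
  show ?thesis
    using card_mono[OF finite_imageI[OF fin] lost_roots_subset_image_lost_roots_Suc[OF assms(1)]]
      card_image_le[OF fin, of "\<lambda>s. the (f (Suc i) s)"] by linarith
qed

lemma card_roots_le_card_level:
  assumes "i \<le> m" "m \<le> j" "\<forall>n\<in>{i..j}. finite (T n)"
  shows "card (roots T f j i) \<le> card (T m)"
proof -
  have fin: "finite (roots T f j n)" if "n \<in> {i..j}" for n
    using assms(3) that by (meson finite_subset roots_subset_level)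
  from assms(1,2) have "card (roots T f j i) \<le> card (roots T f j m)"
  proof (induction m rule: dec_induct)
    case (step n)
    then have "card (roots T f j n) \<le> card (roots T f j (Suc n))"
      by (intro card_roots_le_card_roots_Suc fin) auto
    with step show ?case by simp
  qed simp
  also have "\<dots> \<le> card (T m)"
    using assms by (intro card_mono[OF _ roots_subset_level]) auto
  finally show ?thesis .
qed

theorem theorem1:
  fixes k :: nat and T :: "nat \<Rightarrow> 'a set" and H :: "nat \<Rightarrow> nat \<Rightarrow> nat"
  assumes "k \<ge> 2"
    and "\<forall>n\<in>{1..k}. finite (T n)"
    and "\<forall>i\<in>{1..k}. \<forall>j\<in>{1..k}. j \<le> i \<longrightarrow> H j i = 0"
    and "\<exists>f. reference_structure k T f \<and>
           (\<forall>i\<in>{1..k}. \<forall>j\<in>{1..k}. H j i = linear_join_matrix k T f j i)"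
  shows "(\<forall>i j. 1 \<le> i \<and> i < j \<and> j \<le> k \<longrightarrow> H j i \<le> Min ((\<lambda>n. card (T n)) ` {i..j}))
       \<and> (\<forall>i j. 1 \<le> i \<and> i < j \<and> j < k \<longrightarrow> H j i \<ge> H (j + 1) i)
       \<and> (\<forall>i j. 1 \<le> i \<and> i + 1 < j \<and> j \<le> k \<longrightarrow> H j i \<le> H j (i + 1))
       \<and> (\<forall>i j. 1 \<le> i \<and> i + 1 < j \<and> j < k \<longrightarrow>
            int (H j (i + 1)) - int (H (j + 1) (i + 1)) \<ge> int (H j i) - int (H (j + 1) i))"
proof -
  obtain f where H: "\<forall>i\<in>{1..k}. \<forall>j\<in>{1..k}. H j i = linear_join_matrix k T f j i"
    using assms(4) by blast
  have H_card: "H j i = card (roots T f j i)" if "1 \<le> i" "i < j" "j \<le> k" for i j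
    using H that by (auto simp: linear_join_matrix_def)
  have fin: "finite (roots T f j i)" if "1 \<le> i" "i \<le> k" for i j
    using assms(2) that roots_subset_level finite_subset by (meson atLeastAtMost_iff)
  have L1: "H j i \<le> Min ((\<lambda>n. card (T n)) ` {i..j})" if "1 \<le> i" "i < j" "j \<le> k" for i j
    using that assms(2) by (auto simp: H_card intro!: Min.boundedI card_roots_le_card_level)
  have L2: "H (j + 1) i \<le> H j i" if "1 \<le> i" "i < j" "j < k" for i j
    using that card_roots_Suc_le[OF fin[of i j]] by (simp add: H_card)
  have L3: "H j i \<le> H j (i + 1)" if "1 \<le> i" "i + 1 < j" "j \<le> k" for i j
    using that card_roots_le_card_roots_Suc[OF _ fin[of "Suc i" j]] by (simp add: H_card)
  have L4: "int (H j (i + 1)) - int (H (j + 1) (i + 1)) \<ge> int (H j i) - int (H (j + 1) i)"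
    if "1 \<le> i" "i + 1 < j" "j < k" for i j
    using that card_lost_roots_le_card_lost_roots_Suc[OF _ fin[of "Suc i" j]]
      card_lost_roots[OF fin[of i j]] card_lost_roots[OF fin[of "Suc i" j]]
      card_roots_Suc_le[OF fin[of i j]] card_roots_Suc_le[OF fin[of "Suc i" j]]
    by (simp add: H_card)
  show ?thesis
    using L1 L2 L3 L4 by blast
qed

end
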